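(* Let $M,N\in\mathbb{S}^{q+r}$. If there exists $\alpha\in\mathbb{R}$ with $M-\alpha N\ge 0$, then $\mathcal{Z}_r^0(N)\subseteq\mathcal{Z}_r(M)$. Next, define $\Theta:=\begin{bmatrix}I\\ -N_{22}^\dagger N_{21}\end{bmatrix}^\top M\begin{bmatrix}I\\ -N_{22}^\dagger N_{21}\end{bmatrix}\in\mathbb{S}^q$ and assume that (a) $M,N\in\boldsymbol{\Pi}_{q,r}$, (b) $N\mid N_{22}=0$, and (c) $\ker\Theta\subseteq\ker(M\mid M_{22})$. Then $\mathcal{Z}_r^0(N)\subseteq\mathcal{Z}_r(M)$ if and only if there exists $\alpha\ge 0$ such that $M-\alpha N\ge 0$.
   Context: $\mathbb{S}^k$ denotes the real symmetric $k\times k$ matrices; for symmetric matrices, $A\ge 0$ means positive semidefinite. $A^\dagger$ is the Moore–Penrose pseudo-inverse. Any $\Pi\in\mathbb{S}^{q+r}$ (in particular $M$, $N$) is partitioned as $\Pi=\begin{bmatrix}\Pi_{11}&\Pi_{12}\\ \Pi_{21}&\Pi_{22}\end{bmatrix}$ with $\Pi_{11}\in\mathbb{S}^q$, $\Pi_{22}\in\mathbb{S}^r$. The generalized Schur complement is $\Pi\mid\Pi_{22}:=\Pi_{11}-\Pi_{12}\Pi_{22}^\dagger\Pi_{21}$. The set $\boldsymbol{\Pi}_{q,r}$ consists of all $\Pi\in\mathbb{S}^{q+r}$ with $\Pi_{22}\le 0$, $\Pi\mid\Pi_{22}\ge 0$ and $\ker\Pi_{22}\subseteq\ker\Pi_{12}$.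 Define $\mathcal{Z}_r(\Pi)=\{Z\in\mathbb{R}^{r\times q}:\begin{bmatrix}I_q\\ Z\end{bmatrix}^\top\Pi\begin{bmatrix}I_q\\ Z\end{bmatrix}\ge 0\}$ and $\mathcal{Z}_r^0(\Pi)$ the same with $=0$. *)

theory Defs
  imports "HOL-Analysis.Analysis"
begin

definition symmetric_mat :: "real^'n^'n \<Rightarrow> bool" where
  "symmetric_mat A \<longleftrightarrow> transpose A = A"

definition psd :: "real^'n^'n \<Rightarrow> bool" where
  "psd A \<longleftrightarrow> symmetric_mat A \<and> (\<forall>x. x \<bullet> (A *v x) \<ge> 0)"

definition mat_ker :: "real^'n^'m \<Rightarrow> (real^'n) set" where
  "mat_ker A = {x. A *v x = 0}"

definition pinv :: "real^'n^'m \<Rightarrow> real^'m^'n" where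
  "pinv A = (THE X. A ** X ** A = A \<and> X ** A ** X = X \<and>
                    transpose (A ** X) = A ** X \<and> transpose (X ** A) = X ** A)"

definition blk11 :: "real^('q::finite+'r::finite)^('q+'r) \<Rightarrow> real^'q^'q" where
  "blk11 P = (\<chi> i j. P $ Inl i $ Inl j)"
definition blk12 :: "real^('q::finite+'r::finite)^('q+'r) \<Rightarrow> real^'r^'q" where
  "blk12 P = (\<chi> i j. P $ Inl i $ Inr j)"
definition blk21 :: "real^('q::finite+'r::finite)^('q+'r) \<Rightarrow> real^'q^'r" where
  "blk21 P = (\<chi> i j. P $ Inr i $ Inl j)"
definition blk22 :: "real^('q::finite+'r::finite)^('q+'r) \<Rightarrow> real^'r^'r" where
  "blk22 P = (\<chi> i j. P $ Inr i $ Inr j)"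

definition schur :: "real^('q::finite+'r::finite)^('q+'r) \<Rightarrow> real^'q^'q" where
  "schur P = blk11 P - blk12 P ** pinv (blk22 P) ** blk21 P"

definition PiSet :: "(real^('q::finite+'r::finite)^('q+'r)) set" where
  "PiSet = {P. symmetric_mat P \<and> psd (- blk22 P) \<and> psd (schur P) \<and>
               mat_ker (blk22 P) \<subseteq> mat_ker (blk12 P)}"

definition stackI :: "real^'q^'r \<Rightarrow> real^'q^('q::finite+'r::finite)" where
  "stackI Z = (\<chi> i j. case i of Inl a \<Rightarrow> (mat 1 :: real^'q^'q) $ a $ j | Inr b \<Rightarrow> Z $ b $ j)"

definition Zset :: "real^('q::finite+'r::finite)^('q+'r) \<Rightarrow> (real^'q^'r) set" where
  "Zset P = {Z. psd (transpose (stackI Z) ** P ** stackI Z)}"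

definition Zset0 :: "real^('q::finite+'r::finite)^('q+'r) \<Rightarrow> (real^'q^'r) set" where
  "Zset0 P = {Z. transpose (stackI Z) ** P ** stackI Z = 0}"

end

theory Submission
  imports Defs
begin

(* If M - \<alpha>N \<ge> 0, then on the range of [I; Z] with Z \<in> Z\<^sup>0(N) the form of M coincides with the
   form of M - \<alpha>N, which gives the first claim.

   For the converse put Z\<^sub>0 = -N\<^sub>2\<^sub>2\<^sup>\<dagger> N\<^sub>2\<^sub>1. Since N | N\<^sub>2\<^sub>2 = 0, the form of N at (x, Z\<^sub>0 x + u) is
   u' N\<^sub>2\<^sub>2 u, so Z\<^sub>0 + W \<in> Z\<^sup>0(N) whenever N\<^sub>2\<^sub>2 W = 0. Taking W = 0 gives \<Theta> \<ge> 0, and rank-one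
   choices of W show that ker N\<^sub>2\<^sub>2 is annihilated by M\<^sub>2\<^sub>2 and M\<^sub>1\<^sub>2, so only the component of u in
   the range of N\<^sub>2\<^sub>2 matters. Completing the square in the form of M shows that
   ker \<Theta> \<subseteq> ker (M\<^sub>2\<^sub>1 + M\<^sub>2\<^sub>2 Z\<^sub>0); hence the cross term between x and u is dominated by \<Theta>, the
   remaining part by -N\<^sub>2\<^sub>2, and M - \<alpha>N \<ge> 0 for \<alpha> large. *)

lemma inner_transpose_mult: "(transpose A *v x) \<bullet> (y::real^_) = x \<bullet> (A *v y)"
  by (simp add: dot_lmul_matrix)

lemma inner_symmetric_mult: "transpose A = A \<Longrightarrow> (A *v x) \<bullet> (y::real^_) = x \<bullet> (A *v y)"
  by (metis inner_transpose_mult)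

lemma inner_congruence_mult:
  "(x::real^_) \<bullet> ((transpose S ** M ** S) *v x) = (S *v x) \<bullet> (M *v (S *v x))"
proof -
  have "(transpose S ** M ** S) *v x = transpose S *v (M *v (S *v x))"
    by (simp add: matrix_vector_mul_assoc matrix_mul_assoc)
  then show ?thesis using inner_transpose_mult[of "transpose S" x "M *v (S *v x)"] by simp
qed

lemma symmetric_mat_congruence: "symmetric_mat M \<Longrightarrow> symmetric_mat (transpose S ** M ** S)"
  unfolding symmetric_mat_def by (simp add: matrix_transpose_mul matrix_mul_assoc)

lemma transpose_diff: "transpose (A - B) = transpose A - transpose (B::real^'n^'m)"
  by (simp add: transpose_def vec_eq_iff)

lemma matrix_vector_mult_uminus: "(- A) *v x = - (A *v (x::real^_))"
  by (simp add: vec_eq_iff matrix_vector_mult_def sum_negf)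

lemma psd_transpose: "psd P \<Longrightarrow> transpose P = P"
  by (simp add: psd_def symmetric_mat_def)

section \<open>Moore--Penrose inverse of a symmetric matrix\<close>

lemma outer_sum_mult:
  fixes B :: "(real^'n) set"
  shows "(\<chi> i j. \<Sum>b\<in>B. b$i * b$j) *v x = (\<Sum>b\<in>B. (b \<bullet> x) *\<^sub>R b)"
proof -
  have "((\<chi> i j. \<Sum>b\<in>B. b$i * b$j) *v x) $ i = (\<Sum>b\<in>B. (b \<bullet> x) * b$i)" for i
  proof -
    have "((\<chi> i j. \<Sum>b\<in>B. b$i * b$j) *v x) $ i = (\<Sum>j\<in>UNIV. \<Sum>b\<in>B. b$i * b$j * x$j)"
      unfolding matrix_vector_mult_def by (simp add: sum_distrib_right)
    also have "\<dots> = (\<Sum>b\<in>B. \<Sum>j\<in>UNIV. b$i * b$j * x$j)" by (rule sum.swap)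
    also have "\<dots> = (\<Sum>b\<in>B. (b \<bullet> x) * b$i)"
      by (simp add: inner_vec_def sum_distrib_left sum_distrib_right mult_ac)
    finally show ?thesis .
  qed
  then show ?thesis by (simp add: vec_eq_iff sum_component)
qed

lemma symmetric_projection_onto_subspace:
  fixes S :: "(real^'n) set"
  assumes "subspace S"
  obtains P :: "real^'n^'n"
  where "transpose P = P" "\<And>x. P *v x \<in> S" "\<And>y. y \<in> S \<Longrightarrow> P *v y = y"
proof -
  obtain B where B: "B \<subseteq> S" "pairwise orthogonal B" "\<And>x. x \<in> B \<Longrightarrow> norm x = 1"
    "independent B" "span B = S"
    using orthonormal_basis_subspace[OF assms] by metis
  have fin: "finite B" using \<open>independent B\<close> independent_imp_finite by blast
  define P :: "real^'n^'n" where "P = (\<chi> i j. \<Sum>b\<in>B. b$i * b$j)"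
  have Pv: "P *v x = (\<Sum>b\<in>B. (b \<bullet> x) *\<^sub>R b)" for x
    unfolding P_def by (rule outer_sum_mult)
  have inner_P: "b' \<bullet> (P *v y) = b' \<bullet> y" if "b' \<in> B" for b' y
  proof -
    have "b' \<bullet> (P *v y) = (\<Sum>b\<in>B. if b = b' then b \<bullet> y else 0)"
      unfolding Pv inner_sum_right
    proof (rule sum.cong)
      fix b assume "b \<in> B"
      show "b' \<bullet> ((b \<bullet> y) *\<^sub>R b) = (if b = b' then b \<bullet> y else 0)"
      proof (cases "b = b'")
        case True
        then show ?thesis using B(3)[OF that] by (simp add: dot_square_norm)
      next
        case False
        then show ?thesis using B(2) \<open>b \<in> B\<close> that
          by (auto simp: pairwise_def orthogonal_def inner_commute)
      qed
    qed simp
    also have "\<dots> = b' \<bullet> y" using that fin by (simp add: inner_commute)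
    finally show ?thesis .
  qed
  have range_P: "P *v x \<in> S" for x
    unfolding Pv \<open>span B = S\<close>[symmetric] by (intro span_sum) (simp add: span_base span_scale)
  show ?thesis
  proof
    show "transpose P = P"
      unfolding P_def transpose_def by (simp add: vec_eq_iff mult.commute)
    show "P *v y = y" if "y \<in> S" for y
    proof -
      have "y - P *v y \<in> span B"
        using subspace_diff[OF assms that range_P] \<open>span B = S\<close> by simp
      moreover have "orthogonal (y - P *v y) b" if "b \<in> B" for b
        using inner_P[OF that, of y]
        by (simp add: orthogonal_def inner_diff_left inner_diff_right inner_commute)
      ultimately have "orthogonal (y - P *v y) (y - P *v y)"
        by (metis orthogonal_commute orthogonal_to_span)
      then show ?thesis by (simp add: orthogonal_def)
    qed
  qed (rule range_P)
qed

definition penrose :: "real^'n^'m \<Rightarrow> real^'m^'n \<Rightarrow> bool" where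
  "penrose A X \<longleftrightarrow> A ** X ** A = A \<and> X ** A ** X = X \<and>
                    transpose (A ** X) = A ** X \<and> transpose (X ** A) = X ** A"

lemma penrose_unique:
  assumes "penrose A X" "penrose A Y" shows "X = Y"
proof -
  have X: "A ** X ** A = A" "X ** A ** X = X" "transpose (A ** X) = A ** X" "transpose (X ** A) = X ** A"
    using assms(1) unfolding penrose_def by auto
  have Y: "A ** Y ** A = A" "Y ** A ** Y = Y" "transpose (A ** Y) = A ** Y" "transpose (Y ** A) = Y ** A"
    using assms(2) unfolding penrose_def by auto
  have "X = X ** (transpose X ** transpose A)"
    by (metis X(2,3) matrix_mul_assoc matrix_transpose_mul)
  also have "\<dots> = X ** (transpose X ** (transpose A ** transpose Y ** transpose A))"
    by (metis Y(1) matrix_transpose_mul matrix_mul_assoc)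
  also have "\<dots> = X ** (transpose (A ** X) ** transpose (A ** Y))"
    by (simp add: matrix_transpose_mul matrix_mul_assoc)
  also have "\<dots> = X ** A ** Y" using X(1,3) Y(3) by (simp add: matrix_mul_assoc)
  finally have XAY: "X = X ** A ** Y" .
  have "Y = (transpose A ** transpose Y) ** Y"
    by (metis Y(2,4) matrix_transpose_mul)
  also have "\<dots> = ((transpose A ** transpose X ** transpose A) ** transpose Y) ** Y"
    by (metis X(1) matrix_transpose_mul matrix_mul_assoc)
  also have "\<dots> = (transpose (X ** A) ** transpose (Y ** A)) ** Y"
    by (simp add: matrix_transpose_mul matrix_mul_assoc)
  also have "\<dots> = X ** (A ** Y ** A) ** Y" using X(4) Y(4) by (simp add: matrix_mul_assoc)
  also have "\<dots> = X ** A ** Y" using Y(1) by simp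
  finally show ?thesis using XAY by simp
qed

text \<open>\<open>A + I - P\<close> is invertible and agrees with \<open>A\<close> on the range of \<open>P\<close>; its inverse composed
  with \<open>P\<close> inverts \<open>A\<close> on its range.\<close>
lemma symmetric_inverse_on_range:
  fixes A P :: "real^'n^'n"
  assumes sym: "transpose A = A" and PT: "transpose P = P"
    and Pr: "\<And>x. P *v x \<in> range ((*v) A)" and PA: "\<And>x. P *v (A *v x) = A *v x"
  shows "\<exists>X. A ** X = P \<and> X ** A = P \<and> P ** X = X"
proof -
  have PP: "P *v (P *v x) = P *v x" for x using Pr[of x] PA by auto
  have AP: "A *v (P *v x) = A *v x" for x
  proof -
    have "w \<bullet> (A *v (P *v x)) = w \<bullet> (A *v x)" for w
      by (metis PA PT inner_symmetric_mult sym)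
    then show ?thesis using vector_eq_ldot by blast
  qed
  define B where "B = A + mat 1 - P"
  have Bv: "B *v x = A *v x + x - P *v x" for x
    unfolding B_def by (simp add: algebra_simps)
  have BP: "B *v (P *v x) = A *v x" for x unfolding Bv using AP PP by simp
  have PB: "P *v (B *v x) = A *v x" for x unfolding Bv using PA PP
    by (simp add: matrix_vector_right_distrib matrix_vector_mult_diff_distrib)
  have "x = 0" if B0: "B *v x = 0" for x
  proof -
    have Ax: "A *v x = 0" using PB[of x] B0 by simp
    then have "x = P *v x" using B0 unfolding Bv by (simp add: algebra_simps)
    moreover obtain y where "P *v x = A *v y" using Pr[of x] by auto
    ultimately have "x \<bullet> x = (A *v y) \<bullet> x" by simp
    also have "\<dots> = y \<bullet> (A *v x)" using inner_symmetric_mult[OF sym] by simp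
    finally show "x = 0" using Ax by simp
  qed
  then obtain G where GB: "G ** B = mat 1" using matrix_left_invertible_ker by blast
  then have BG: "B ** G = mat 1" using matrix_left_right_inverse by blast
  have GBv: "G *v (B *v x) = x" for x by (metis GB matrix_vector_mul_assoc matrix_vector_mul_lid)
  have BGv: "B *v (G *v x) = x" for x by (metis BG matrix_vector_mul_assoc matrix_vector_mul_lid)
  have PG: "P *v (G *v x) = G *v (P *v x)" for x by (metis BGv BP GBv PB)
  show ?thesis
  proof (intro exI conjI)
    show "A ** (G ** P) = P"
      unfolding matrix_eq by (metis PB BGv PP matrix_vector_mul_assoc)
    show "G ** P ** A = P"
      unfolding matrix_eq by (metis BP GBv PA matrix_vector_mul_assoc)
    show "P ** (G ** P) = G ** P"
      unfolding matrix_eq by (metis PG PP matrix_vector_mul_assoc)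
  qed
qed

lemma penrose_exists_symmetric:
  fixes A :: "real^'n^'n"
  assumes sym: "transpose A = A"
  shows "\<exists>X. penrose A X"
proof -
  have "subspace (range ((*v) A))" by (simp add: linear_subspace_image)
  then obtain P :: "real^'n^'n" where PT: "transpose P = P" and Pr: "\<And>x. P *v x \<in> range ((*v) A)"
    and fixP: "\<And>y. y \<in> range ((*v) A) \<Longrightarrow> P *v y = y"
    by (rule symmetric_projection_onto_subspace) blast
  have PA: "P *v (A *v x) = A *v x" for x by (simp add: fixP)
  obtain X where AX: "A ** X = P" and XA: "X ** A = P" and PX: "P ** X = X"
    using symmetric_inverse_on_range[OF sym PT Pr PA] by blast
  have "penrose A X"
    unfolding penrose_def
  proof (intro conjI)
    show "A ** X ** A = A" unfolding AX matrix_eq by (simp add: PA flip: matrix_vector_mul_assoc)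
    show "X ** A ** X = X" unfolding XA by (rule PX)
    show "transpose (A ** X) = A ** X" using AX PT by simp
    show "transpose (X ** A) = X ** A" using XA PT by simp
  qed
  then show ?thesis by blast
qed

lemma pinv_penrose_symmetric:
  fixes A :: "real^'n^'n"
  assumes "transpose A = A"
  shows "penrose A (pinv A)"
proof -
  obtain X where X: "penrose A X" using penrose_exists_symmetric[OF assms] by blast
  have "pinv A = X" unfolding pinv_def
    by (rule the_equality) (use X penrose_unique in \<open>auto simp: penrose_def\<close>)
  then show ?thesis using X by simp
qed

lemma pinv_symmetric:
  fixes A :: "real^'n^'n"
  assumes sym: "transpose A = A"
  shows "transpose (pinv A) = pinv A"
proof -
  have p: "penrose A (pinv A)" by (rule pinv_penrose_symmetric[OF sym])
  then have "penrose A (transpose (pinv A))"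
    unfolding penrose_def by (metis matrix_transpose_mul matrix_mul_assoc sym transpose_transpose)
  then show ?thesis using penrose_unique p by blast
qed

lemma
  fixes A :: "real^'n^'n"
  assumes "transpose A = A"
  shows pinv_mult_cancel: "A *v (pinv A *v (A *v v)) = A *v v"
    and pinv_mult_pinv_cancel: "pinv A *v (A *v (pinv A *v v)) = pinv A *v v"
  using pinv_penrose_symmetric[OF assms] unfolding penrose_def
  by (metis matrix_vector_mul_assoc)+

lemma factor_through_pinv:
  fixes A :: "real^'n^'n" and C :: "real^'n^'m"
  assumes "transpose A = A" "\<And>v. A *v v = 0 \<Longrightarrow> C *v v = 0"
  shows "C *v v = C *v (pinv A *v (A *v v))"
proof -
  have "A *v (v - pinv A *v (A *v v)) = 0"
    using pinv_mult_cancel[OF assms(1)] by (simp add: matrix_vector_mult_diff_distrib)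
  then have "C *v (v - pinv A *v (A *v v)) = 0" by (rule assms(2))
  then show ?thesis by (simp add: matrix_vector_mult_diff_distrib)
qed

section \<open>Positive semidefinite forms\<close>

lemma quadratic_nonneg_imp_leading_nonneg:
  fixes a b c :: real
  assumes "\<And>t. a * t^2 + b * t + c \<ge> 0"
  shows "a \<ge> 0"
proof (rule ccontr)
  assume "\<not> a \<ge> 0"
  define t where "t = sqrt ((\<bar>c\<bar> + 1) / - a)"
  have "t^2 = (\<bar>c\<bar> + 1) / - a"
    using \<open>\<not> a \<ge> 0\<close> unfolding t_def by (intro real_sqrt_pow2 divide_nonneg_pos) auto
  then have "a * t^2 = - (\<bar>c\<bar> + 1)"
    using \<open>\<not> a \<ge> 0\<close> by simp
  moreover have "a * t^2 + c \<ge> 0"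
    using assms[of t] assms[of "- t"] by simp
  ultimately show False by linarith
qed

lemma linear_nonneg_imp_slope_zero:
  fixes b c :: real
  assumes "\<And>t. b * t + c \<ge> 0"
  shows "b = 0"
proof (rule ccontr)
  assume "b \<noteq> 0"
  then have "b * (- (\<bar>c\<bar> + 1) / b) + c < 0" by simp
  then show False using assms[of "- (\<bar>c\<bar> + 1) / b"] by simp
qed

lemma quadratic_nonneg_imp_discriminant:
  fixes a b c :: real
  assumes nonneg: "\<And>t. a * t^2 + 2 * b * t + c \<ge> 0"
  shows "b^2 \<le> a * c"
proof (cases "a = 0")
  case True
  then have "2 * b = 0"
    using nonneg by (intro linear_nonneg_imp_slope_zero[of _ c]) simp
  then show ?thesis using True by simp
next
  case False
  then have "a > 0" using quadratic_nonneg_imp_leading_nonneg[of a "2 * b" c] nonneg by simp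
  moreover have "a * (- b / a)^2 + 2 * b * (- b / a) + c = c - b^2 / a"
    using \<open>a > 0\<close> by (simp add: power2_eq_square field_simps)
  ultimately have "c - b^2 / a \<ge> 0" using nonneg[of "- b / a"] by simp
  then show ?thesis using \<open>a > 0\<close> by (simp add: field_simps)
qed

lemma psd_Cauchy_Schwarz:
  assumes "psd P"
  shows "(w \<bullet> (P *v y))^2 \<le> (y \<bullet> (P *v y)) * (w \<bullet> (P *v w))"
proof (rule quadratic_nonneg_imp_discriminant)
  fix t
  have "(w + t *\<^sub>R y) \<bullet> (P *v (w + t *\<^sub>R y)) =
     (y \<bullet> (P *v y)) * t^2 + 2 * (w \<bullet> (P *v y)) * t + (w \<bullet> (P *v w))"
    using inner_symmetric_mult[OF psd_transpose[OF assms], of w y]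
    by (simp add: algebra_simps matrix_vector_right_distrib matrix_vector_mult_scaleR
        inner_add_left inner_add_right power2_eq_square inner_commute)
  then show "(y \<bullet> (P *v y)) * t^2 + 2 * (w \<bullet> (P *v y)) * t + (w \<bullet> (P *v w)) \<ge> 0"
    using assms unfolding psd_def by metis
qed

lemma psd_mult_norm_bound:
  assumes "psd P"
  obtains K where "K > 0" "\<And>y. (P *v y) \<bullet> (P *v y) \<le> K * (y \<bullet> (P *v y))"
proof -
  have nonneg: "\<And>x. x \<bullet> (P *v x) \<ge> 0" using assms unfolding psd_def by simp
  obtain K where K: "K > 0" "\<And>x. norm (P *v x) \<le> K * norm x"
    using linear_bounded_pos[OF matrix_vector_mul_linear] by blast
  have upper_bound: "w \<bullet> (P *v w) \<le> K * (w \<bullet> w)" for w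
  proof -
    have "w \<bullet> (P *v w) \<le> norm w * norm (P *v w)" by (rule norm_cauchy_schwarz)
    also have "\<dots> \<le> norm w * (K * norm w)" by (intro mult_left_mono K(2)) auto
    finally show ?thesis by (simp add: dot_square_norm power2_eq_square mult_ac)
  qed
  show ?thesis
  proof (rule that[OF K(1)])
    fix y
    let ?w = "P *v y"
    have "(?w \<bullet> ?w)^2 \<le> (y \<bullet> (P *v y)) * (?w \<bullet> (P *v ?w))"
      using psd_Cauchy_Schwarz[OF assms, of ?w y] by simp
    also have "\<dots> \<le> (y \<bullet> (P *v y)) * (K * (?w \<bullet> ?w))"
      using upper_bound[of ?w] nonneg[of y] by (intro mult_left_mono) auto
    finally have "(?w \<bullet> ?w) * (?w \<bullet> ?w) \<le> (K * (y \<bullet> (P *v y))) * (?w \<bullet> ?w)"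
      by (simp add: power2_eq_square mult_ac)
    then show "?w \<bullet> ?w \<le> K * (y \<bullet> (P *v y))"
      using K(1) nonneg[of y] by (cases "?w \<bullet> ?w = 0") (auto simp: inner_gt_zero_iff)
  qed
qed

lemma psd_quadratic_zero:
  assumes "psd P" "y \<bullet> (P *v y) = 0"
  shows "P *v y = 0"
proof -
  obtain K where "(P *v y) \<bullet> (P *v y) \<le> K * (y \<bullet> (P *v y))"
    using psd_mult_norm_bound[OF assms(1)] by blast
  then show ?thesis using assms(2) inner_gt_zero_iff[of "P *v y"] by (simp del: inner_gt_zero_iff)
qed

lemma symmetric_quadratic_form_zero:
  fixes Q :: "real^'n^'n"
  assumes "transpose Q = Q" "\<And>x. x \<bullet> (Q *v x) = 0"
  shows "Q = 0"
proof -
  have "psd Q" using assms unfolding psd_def symmetric_mat_def by simp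
  then have "Q *v x = 0" for x using psd_quadratic_zero assms(2) by blast
  then show ?thesis by (simp add: matrix_eq)
qed

lemma psd_kernel_norm_bound:
  fixes P :: "real^'n^'n" and C :: "real^'n^'m"
  assumes "psd P" "\<And>x. P *v x = 0 \<Longrightarrow> C *v x = 0"
  shows "\<exists>K>0. \<forall>x. (norm (C *v x))^2 \<le> K * (x \<bullet> (P *v x))"
proof -
  obtain K where K: "K > 0" "\<And>y. (P *v y) \<bullet> (P *v y) \<le> K * (y \<bullet> (P *v y))"
    using psd_mult_norm_bound[OF assms(1)] by blast
  obtain B where B: "B > 0" "\<And>v. norm ((C ** pinv P) *v v) \<le> B * norm v"
    using linear_bounded_pos[OF matrix_vector_mul_linear[of "C ** pinv P"]] by blast
  show ?thesis
  proof (intro exI[of _ "B^2 * K"] conjI allI)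
    show "B^2 * K > 0" using B(1) K(1) by simp
    fix x
    have "C *v x = (C ** pinv P) *v (P *v x)"
      using factor_through_pinv[OF psd_transpose[OF assms(1)] assms(2)]
      by (simp add: matrix_vector_mul_assoc matrix_mul_assoc)
    then have "norm (C *v x) \<le> B * norm (P *v x)" using B(2) by simp
    then have "(norm (C *v x))^2 \<le> B^2 * ((P *v x) \<bullet> (P *v x))"
      by (metis norm_ge_zero power_mono power_mult_distrib power2_norm_eq_inner)
    also have "\<dots> \<le> B^2 * (K * (x \<bullet> (P *v x)))"
      using K(2) by (intro mult_left_mono) auto
    finally show "(norm (C *v x))^2 \<le> B^2 * K * (x \<bullet> (P *v x))" by (simp add: mult_ac)
  qed
qed

section \<open>Block coordinates\<close>

lemma sum_UNIV_Plus:
  "(\<Sum>j\<in>(UNIV::('q::finite+'r::finite) set). f j) = (\<Sum>a\<in>UNIV. f (Inl a)) + (\<Sum>b\<in>UNIV. f (Inr b))"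
  by (simp add: UNIV_Plus_UNIV[symmetric] sum.Plus del: UNIV_Plus_UNIV)

definition upper_part :: "real^('q::finite+'r::finite) \<Rightarrow> real^'q" where
  "upper_part v = (\<chi> a. v $ Inl a)"

definition lower_part :: "real^('q::finite+'r::finite) \<Rightarrow> real^'r" where
  "lower_part v = (\<chi> b. v $ Inr b)"

definition vstack :: "real^'q \<Rightarrow> real^'r \<Rightarrow> real^('q::finite+'r::finite)" where
  "vstack x y = (\<chi> i. case i of Inl a \<Rightarrow> x $ a | Inr b \<Rightarrow> y $ b)"

lemma upper_part_vstack [simp]: "upper_part (vstack x y) = x"
  and lower_part_vstack [simp]: "lower_part (vstack x y) = y"
  by (simp_all add: upper_part_def lower_part_def vstack_def vec_eq_iff)

lemma vstack_parts: "vstack (upper_part v) (lower_part v) = v"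
  by (simp add: upper_part_def lower_part_def vstack_def vec_eq_iff split: sum.split)

lemma vstack_add: "vstack x y + vstack x' y' = vstack (x + x') (y + y')"
  by (simp add: vstack_def vec_eq_iff split: sum.split)

lemma vstack_zero [simp]: "vstack 0 0 = 0"
  by (simp add: vstack_def vec_eq_iff split: sum.split)

lemma inner_upper_lower: "(v::real^('q::finite+'r::finite)) \<bullet> w =
    upper_part v \<bullet> upper_part w + lower_part v \<bullet> lower_part w"
  by (simp add: inner_vec_def upper_part_def lower_part_def sum_UNIV_Plus)

lemma upper_part_mult:
  fixes M :: "real^('q::finite+'r::finite)^('q+'r)"
  shows "upper_part (M *v v) = blk11 M *v upper_part v + blk12 M *v lower_part v"
  by (simp add: vec_eq_iff upper_part_def lower_part_def blk11_def blk12_def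
      matrix_vector_mult_def sum_UNIV_Plus)

lemma lower_part_mult:
  fixes M :: "real^('q::finite+'r::finite)^('q+'r)"
  shows "lower_part (M *v v) = blk21 M *v upper_part v + blk22 M *v lower_part v"
  by (simp add: vec_eq_iff upper_part_def lower_part_def blk21_def blk22_def
      matrix_vector_mult_def sum_UNIV_Plus)

lemma stackI_mult: "stackI Z *v x = vstack x (Z *v x)"
proof -
  have "(stackI Z *v x) $ Inl a = x $ a" for a
  proof -
    have "(stackI Z *v x) $ Inl a = ((mat 1 :: real^_^_) *v x) $ a"
      by (simp add: matrix_vector_mult_def stackI_def)
    then show ?thesis by simp
  qed
  then show ?thesis
    by (simp add: vec_eq_iff vstack_def matrix_vector_mult_def stackI_def split: sum.split)
qed

lemma blk_transpose:
  assumes "symmetric_mat M"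
  shows "transpose (blk12 M) = blk21 M" "transpose (blk22 M) = blk22 M"
proof -
  have "M $ i $ j = M $ j $ i" for i j
  proof -
    have "M $ i $ j = transpose M $ i $ j" using assms by (simp add: symmetric_mat_def)
    then show ?thesis by (simp add: transpose_def)
  qed
  then show "transpose (blk12 M) = blk21 M" "transpose (blk22 M) = blk22 M"
    by (auto simp: vec_eq_iff transpose_def blk12_def blk21_def blk22_def)
qed

lemma inner_blk12_blk21:
  assumes "symmetric_mat M"
  shows "x \<bullet> (blk12 M *v y) = y \<bullet> (blk21 M *v x)"
  using inner_transpose_mult[of "blk12 M" x y] blk_transpose(1)[OF assms]
  by (simp add: inner_commute)

lemma quadratic_form_blocks:
  fixes M :: "real^('q::finite+'r::finite)^('q+'r)"
  assumes "symmetric_mat M"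
  shows "vstack x y \<bullet> (M *v vstack x y) =
    x \<bullet> (blk11 M *v x) + 2 * (y \<bullet> (blk21 M *v x)) + y \<bullet> (blk22 M *v y)"
  using inner_blk12_blk21[OF assms, of x y]
  by (simp add: inner_upper_lower[of "vstack x y"] upper_part_mult lower_part_mult inner_add_right)

lemma quadratic_form_vstack_add:
  fixes M :: "real^('q::finite+'r::finite)^('q+'r)"
  assumes "symmetric_mat M"
  shows "vstack x (z + u) \<bullet> (M *v vstack x (z + u)) =
    vstack x z \<bullet> (M *v vstack x z) + 2 * (u \<bullet> lower_part (M *v vstack x z)) + u \<bullet> (blk22 M *v u)"
proof -
  let ?p = "vstack x z" and ?q = "vstack 0 u"
  have "vstack x (z + u) = ?p + ?q" by (simp add: vstack_add)
  moreover have "?p \<bullet> (M *v ?q) = ?q \<bullet> (M *v ?p)"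
    using inner_symmetric_mult[of M ?q ?p] assms by (simp add: symmetric_mat_def inner_commute)
  moreover have "?q \<bullet> (M *v ?p) = u \<bullet> lower_part (M *v ?p)"
    by (simp add: inner_upper_lower[of ?q])
  moreover have "?q \<bullet> (M *v ?q) = u \<bullet> (blk22 M *v u)"
    by (simp add: inner_upper_lower[of ?q] lower_part_mult)
  ultimately show ?thesis
    by (simp add: matrix_vector_right_distrib inner_add_left inner_add_right)
qed

lemma quadratic_form_add_kernel:
  assumes "transpose M = M" "M *v k = 0"
  shows "(v + k) \<bullet> (M *v (v + k)) = v \<bullet> (M *v (v::real^_))"
  using inner_symmetric_mult[OF assms(1), of k v] assms(2)
  by (simp add: matrix_vector_right_distrib inner_add_left inner_add_right)

lemma mult_vstack_zero:
  fixes M :: "real^('q::finite+'r::finite)^('q+'r)"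
  assumes "blk22 M *v y = 0" "blk12 M *v y = 0"
  shows "M *v vstack 0 y = 0"
proof -
  have "M *v vstack 0 y = vstack (upper_part (M *v vstack 0 y)) (lower_part (M *v vstack 0 y))"
    by (rule vstack_parts[symmetric])
  also have "\<dots> = 0" using assms by (simp add: upper_part_mult lower_part_mult)
  finally show ?thesis .
qed

section \<open>Generalized Schur complement\<close>

lemma blk22_pinv_blk21:
  fixes P :: "real^('q::finite+'r::finite)^('q+'r)"
  assumes sym: "symmetric_mat P" and ker: "mat_ker (blk22 P) \<subseteq> mat_ker (blk12 P)"
  shows "blk22 P *v (pinv (blk22 P) *v (blk21 P *v x)) = blk21 P *v x"
proof -
  let ?A = "blk22 P" and ?Y = "pinv (blk22 P)"
  have A_sym: "transpose ?A = ?A" by (rule blk_transpose(2)[OF sym])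
  have "v \<bullet> (blk21 P *v x) = v \<bullet> (?A *v (?Y *v (blk21 P *v x)))" for v
  proof -
    have "v \<bullet> (blk21 P *v x) = x \<bullet> (blk12 P *v v)" by (rule inner_blk12_blk21[OF sym, symmetric])
    also have "\<dots> = x \<bullet> (blk12 P *v (?Y *v (?A *v v)))"
      using factor_through_pinv[OF A_sym, of "blk12 P" v] ker by (simp add: mat_ker_def subset_eq)
    also have "\<dots> = (?Y *v (?A *v v)) \<bullet> (blk21 P *v x)" by (rule inner_blk12_blk21[OF sym])
    also have "\<dots> = (?A *v v) \<bullet> (?Y *v (blk21 P *v x))"
      by (rule inner_symmetric_mult[OF pinv_symmetric[OF A_sym]])
    also have "\<dots> = v \<bullet> (?A *v (?Y *v (blk21 P *v x)))" by (rule inner_symmetric_mult[OF A_sym])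
    finally show ?thesis .
  qed
  then show ?thesis using vector_eq_ldot by metis
qed

lemma lower_part_mult_in_range:
  fixes P :: "real^('q::finite+'r::finite)^('q+'r)"
  assumes sym: "symmetric_mat P" and ker: "mat_ker (blk22 P) \<subseteq> mat_ker (blk12 P)"
  shows "blk22 P *v (pinv (blk22 P) *v lower_part (P *v v)) = lower_part (P *v v)"
  using blk22_pinv_blk21[OF assms] pinv_mult_cancel[OF blk_transpose(2)[OF sym]]
  by (simp add: lower_part_mult matrix_vector_right_distrib)

lemma quadratic_form_schur_completion:
  fixes P :: "real^('q::finite+'r::finite)^('q+'r)"
  assumes sym: "symmetric_mat P" and ker: "mat_ker (blk22 P) \<subseteq> mat_ker (blk12 P)"
  shows "v \<bullet> (P *v v) = upper_part v \<bullet> (schur P *v upper_part v)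
           + lower_part (P *v v) \<bullet> (pinv (blk22 P) *v lower_part (P *v v))"
proof -
  define x z where "x = upper_part v" and "z = lower_part v"
  let ?A = "blk22 P" and ?Y = "pinv (blk22 P)"
  define a where "a = blk21 P *v x"
  have A_sym: "transpose ?A = ?A" by (rule blk_transpose(2)[OF sym])
  have Y_sym: "transpose ?Y = ?Y" by (rule pinv_symmetric[OF A_sym])
  have AYa: "?A *v (?Y *v a) = a" unfolding a_def by (rule blk22_pinv_blk21[OF sym ker])
  have lower: "lower_part (P *v v) = a + ?A *v z"
    unfolding a_def x_def z_def by (simp add: lower_part_mult)
  have form: "v \<bullet> (P *v v) = x \<bullet> (blk11 P *v x) + 2 * (z \<bullet> a) + z \<bullet> (?A *v z)"
    using quadratic_form_blocks[OF sym, of x z] vstack_parts[of v]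
    unfolding a_def x_def z_def by simp
  have "(blk12 P ** ?Y ** blk21 P) *v x = blk12 P *v (?Y *v a)"
    unfolding a_def by (simp add: matrix_vector_mul_assoc matrix_mul_assoc)
  then have schur: "x \<bullet> (schur P *v x) = x \<bullet> (blk11 P *v x) - a \<bullet> (?Y *v a)"
    unfolding schur_def using inner_blk12_blk21[OF sym, of x "?Y *v a"] a_def
    by (simp add: matrix_vector_mult_diff_rdistrib inner_diff_right inner_commute)
  have "a \<bullet> (?Y *v (?A *v z)) = a \<bullet> z"
    using inner_symmetric_mult[OF Y_sym, of a "?A *v z"] inner_symmetric_mult[OF A_sym, of "?Y *v a" z]
      AYa by simp
  moreover have "(?A *v z) \<bullet> (?Y *v a) = a \<bullet> z"
    using inner_symmetric_mult[OF A_sym, of z "?Y *v a"] AYa by (simp add: inner_commute)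
  moreover have "(?A *v z) \<bullet> (?Y *v (?A *v z)) = z \<bullet> (?A *v z)"
    using inner_symmetric_mult[OF A_sym, of z "?Y *v (?A *v z)"] pinv_mult_cancel[OF A_sym, of z]
    by simp
  ultimately show ?thesis
    unfolding lower form x_def[symmetric] schur
    by (simp add: matrix_vector_right_distrib inner_add_left inner_add_right inner_commute)
qed

lemma pinv_quadratic_zero:
  fixes A :: "real^'n^'n"
  assumes "psd (- A)" "A *v (pinv A *v w) = w" "w \<bullet> (pinv A *v w) = 0"
  shows "w = 0"
proof -
  have "(pinv A *v w) \<bullet> ((- A) *v (pinv A *v w)) = 0"
    using assms(2,3) by (simp add: matrix_vector_mult_uminus inner_commute)
  then have "A *v (pinv A *v w) = 0"
    using psd_quadratic_zero[OF assms(1)] by (simp add: matrix_vector_mult_uminus)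
  then show ?thesis using assms(2) by simp
qed

lemma lower_part_mult_eq_zero:
  fixes P :: "real^('q::finite+'r::finite)^('q+'r)"
  assumes sym: "symmetric_mat P" and ker: "mat_ker (blk22 P) \<subseteq> mat_ker (blk12 P)"
    and "psd (- blk22 P)" and "v \<bullet> (P *v v) = 0"
    and "upper_part v \<bullet> (schur P *v upper_part v) = 0"
  shows "lower_part (P *v v) = 0"
  using pinv_quadratic_zero[OF assms(3) lower_part_mult_in_range[OF sym ker]]
    quadratic_form_schur_completion[OF sym ker, of v] assms(4,5)
  by simp

definition schur_gain :: "real^('q::finite+'r::finite)^('q+'r) \<Rightarrow> real^'q^'r" where
  "schur_gain N = - (pinv (blk22 N) ** blk21 N)"

lemma quadratic_form_schur_gain:
  fixes N :: "real^('q::finite+'r::finite)^('q+'r)"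
  assumes sym: "symmetric_mat N" and ker: "mat_ker (blk22 N) \<subseteq> mat_ker (blk12 N)"
    and "schur N = 0"
  shows "vstack x (schur_gain N *v x + u) \<bullet> (N *v vstack x (schur_gain N *v x + u))
    = u \<bullet> (blk22 N *v u)"
proof -
  let ?A = "blk22 N" and ?v = "vstack x (schur_gain N *v x + u)"
  have A_sym: "transpose ?A = ?A" by (rule blk_transpose(2)[OF sym])
  have "lower_part (N *v ?v) = ?A *v u"
    using blk22_pinv_blk21[OF sym ker, of x]
    by (simp add: lower_part_mult schur_gain_def matrix_vector_right_distrib
        matrix_vector_mult_diff_distrib matrix_vector_mult_uminus matrix_vector_mul_assoc[symmetric])
  moreover have "(?A *v u) \<bullet> (pinv ?A *v (?A *v u)) = u \<bullet> (?A *v u)"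
    using inner_symmetric_mult[OF A_sym, of u] pinv_mult_cancel[OF A_sym, of u] by simp
  ultimately show ?thesis
    using quadratic_form_schur_completion[OF sym ker, of ?v] assms(3) by simp
qed

section \<open>Comparing the parameter sets\<close>

lemma Zset0_subset_Zset_if_psd_combination:
  fixes M N :: "real^('q::finite+'r::finite)^('q+'r)"
  assumes sym: "symmetric_mat M" and psd_comb: "psd (M - \<alpha> *\<^sub>R N)"
  shows "Zset0 N \<subseteq> Zset M"
proof
  fix Z assume "Z \<in> Zset0 N"
  then have Z0: "transpose (stackI Z) ** N ** stackI Z = 0" by (simp add: Zset0_def)
  show "Z \<in> Zset M" unfolding Zset_def psd_def
  proof (intro CollectI conjI allI)
    show "symmetric_mat (transpose (stackI Z) ** M ** stackI Z)"
      by (rule symmetric_mat_congruence[OF sym])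
    fix x
    let ?w = "stackI Z *v x"
    have "?w \<bullet> (N *v ?w) = 0" using inner_congruence_mult[of x "stackI Z" N] Z0 by simp
    moreover have "?w \<bullet> ((M - \<alpha> *\<^sub>R N) *v ?w) \<ge> 0" using psd_comb unfolding psd_def by blast
    ultimately show "0 \<le> x \<bullet> ((transpose (stackI Z) ** M ** stackI Z) *v x)"
      by (simp add: inner_congruence_mult matrix_vector_mult_diff_rdistrib
          scaleR_matrix_vector_assoc[symmetric] inner_diff_right)
  qed
qed

lemma quadratic_form_stackI_add:
  fixes M :: "real^('q::finite+'r::finite)^('q+'r)" and Z :: "real^'q^'r"
  assumes "symmetric_mat M"
  shows "vstack x (Z *v x + u) \<bullet> (M *v vstack x (Z *v x + u)) =
    x \<bullet> ((transpose (stackI Z) ** M ** stackI Z) *v x)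
    + 2 * (u \<bullet> ((blk21 M + blk22 M ** Z) *v x)) + u \<bullet> (blk22 M *v u)"
  using quadratic_form_vstack_add[OF assms, of x "Z *v x" u]
  by (simp add: inner_congruence_mult stackI_mult lower_part_mult
      matrix_vector_mult_add_rdistrib matrix_vector_mul_assoc)

lemma schur_gain_perturbation_in_Zset0:
  fixes N :: "real^('q::finite+'r::finite)^('q+'r)"
  assumes sym: "symmetric_mat N" and ker: "mat_ker (blk22 N) \<subseteq> mat_ker (blk12 N)"
    and "schur N = 0" and "\<And>x. blk22 N *v (W *v x) = 0"
  shows "schur_gain N + W \<in> Zset0 N"
  unfolding Zset0_def
proof (intro CollectI symmetric_quadratic_form_zero)
  let ?S = "stackI (schur_gain N + W)"
  show "transpose (transpose ?S ** N ** ?S) = transpose ?S ** N ** ?S"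
    using symmetric_mat_congruence[OF sym] by (simp add: symmetric_mat_def)
  fix x
  show "x \<bullet> ((transpose ?S ** N ** ?S) *v x) = 0"
    unfolding inner_congruence_mult stackI_mult
    using quadratic_form_schur_gain[OF sym ker assms(3), of x "W *v x"] assms(4)[of x]
    by (simp add: matrix_vector_mult_add_rdistrib)
qed

lemma square_completion_bound:
  fixes u c :: "real^'n" and D :: "real^'n^'n"
  assumes "(norm c)^2 \<le> K * t" "K > 0" "(norm u)^2 \<le> L * p"
    and "B \<ge> 0" "\<And>y. norm (D *v y) \<le> B * norm y"
  shows "t + 2 * (u \<bullet> c) + u \<bullet> (D *v u) + ((K + B) * L) * p \<ge> 0"
proof -
  have "u \<bullet> c \<ge> - (norm c * norm u)"
    using Cauchy_Schwarz_ineq2[of u c] by (simp add: mult.commute abs_le_iff)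
  moreover have "u \<bullet> (D *v u) \<ge> - (B * (norm u)^2)"
  proof -
    have "\<bar>u \<bullet> (D *v u)\<bar> \<le> norm u * norm (D *v u)" by (rule Cauchy_Schwarz_ineq2)
    also have "\<dots> \<le> norm u * (B * norm u)" by (intro mult_left_mono assms(5)) auto
    finally show ?thesis by (simp add: power2_eq_square mult_ac abs_le_iff)
  qed
  moreover have "0 \<le> t - 2 * (norm c * norm u) + K * (norm u)^2"
  proof -
    have "0 \<le> (norm c - K * norm u)^2" by simp
    also have "\<dots> \<le> K * (t - 2 * (norm c * norm u) + K * (norm u)^2)"
      using assms(1) by (simp add: power2_eq_square algebra_simps)
    finally show ?thesis using assms(2) by (simp add: zero_le_mult_iff)
  qed
  moreover have "(K + B) * (norm u)^2 \<le> (K + B) * (L * p)"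
    using assms(2-4) by (intro mult_left_mono) auto
  ultimately show ?thesis by (simp add: algebra_simps)
qed

context
  fixes M N :: "real^('q::finite+'r::finite)^('q+'r)"
  assumes sym_M: "symmetric_mat M" and sym_N: "symmetric_mat N"
    and M_Pi: "M \<in> PiSet" and N_Pi: "N \<in> PiSet" and schur_N: "schur N = 0"
    and Zset_incl: "Zset0 N \<subseteq> Zset M"
begin

lemma psd_schur_gain_form:
  "psd (transpose (stackI (schur_gain N)) ** M ** stackI (schur_gain N))"
proof -
  have "schur_gain N + 0 \<in> Zset0 N"
    using sym_N N_Pi schur_N by (intro schur_gain_perturbation_in_Zset0) (auto simp: PiSet_def)
  then show ?thesis using Zset_incl by (auto simp: Zset_def)
qed

lemma ker_blk22_annihilates:
  assumes "blk22 N *v y = 0"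
  shows "blk22 M *v y = 0" "blk12 M *v y = 0"
proof -
  \<comment> \<open>Any column index \<open>i\<close> will do: \<open>schur_gain N + W \<tau>\<close> stays in \<open>Zset0 N\<close> for every \<open>\<tau>\<close>, so
    the form of \<open>M\<close> is a nonnegative quadratic in \<open>\<tau>\<close> with leading coefficient \<open>y' M\<^sub>2\<^sub>2 y\<close>.\<close>
  define i :: 'q where "i = undefined"
  define W :: "real \<Rightarrow> real^'q^'r" where "W \<tau> = (\<chi> j k. if k = i then \<tau> * y $ j else 0)" for \<tau>
  let ?x = "axis i 1 :: real^'q" and ?Z = "schur_gain N"
  have W_mult: "W \<tau> *v x = (\<tau> * x $ i) *\<^sub>R y" for \<tau> x
    unfolding W_def by (simp add: vec_eq_iff matrix_vector_mult_def if_distrib if_distribR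
        sum.delta mult_ac cong: if_cong)
  have "(y \<bullet> (blk22 M *v y)) * \<tau>^2 + (2 * (y \<bullet> ((blk21 M + blk22 M ** ?Z) *v ?x))) * \<tau>
      + ?x \<bullet> ((transpose (stackI ?Z) ** M ** stackI ?Z) *v ?x) \<ge> 0" for \<tau>
  proof -
    have "?Z + W \<tau> \<in> Zset0 N"
      using sym_N N_Pi schur_N assms
      by (intro schur_gain_perturbation_in_Zset0) (auto simp: PiSet_def W_mult matrix_vector_mult_scaleR)
    then have "?x \<bullet> ((transpose (stackI (?Z + W \<tau>)) ** M ** stackI (?Z + W \<tau>)) *v ?x) \<ge> 0"
      using Zset_incl by (auto simp: Zset_def psd_def)
    then have "vstack ?x (?Z *v ?x + \<tau> *\<^sub>R y) \<bullet> (M *v vstack ?x (?Z *v ?x + \<tau> *\<^sub>R y)) \<ge> 0"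
      by (simp add: inner_congruence_mult stackI_mult matrix_vector_mult_add_rdistrib W_mult)
    then show ?thesis
      unfolding quadratic_form_stackI_add[OF sym_M]
      by (simp add: matrix_vector_mult_scaleR power2_eq_square algebra_simps)
  qed
  then have "y \<bullet> (blk22 M *v y) \<ge> 0" by (rule quadratic_nonneg_imp_leading_nonneg)
  moreover have "psd (- blk22 M)" using M_Pi by (simp add: PiSet_def)
  ultimately have "(- blk22 M) *v y = 0"
    by (intro psd_quadratic_zero) (auto simp: psd_def matrix_vector_mult_uminus intro: antisym)
  then show "blk22 M *v y = 0" by (simp add: matrix_vector_mult_uminus)
  then show "blk12 M *v y = 0" using M_Pi by (auto simp: PiSet_def mat_ker_def)
qed

lemma schur_gain_cross_vanishes:
  assumes "mat_ker (transpose (stackI (schur_gain N)) ** M ** stackI (schur_gain N))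
      \<subseteq> mat_ker (schur M)"
    and "(transpose (stackI (schur_gain N)) ** M ** stackI (schur_gain N)) *v x = 0"
  shows "(blk21 M + blk22 M ** schur_gain N) *v x = 0"
proof -
  let ?v = "stackI (schur_gain N) *v x"
  have "?v \<bullet> (M *v ?v) = 0"
    using assms(2) inner_congruence_mult[of x "stackI (schur_gain N)" M] by simp
  moreover have "schur M *v x = 0" using assms by (auto simp: mat_ker_def)
  ultimately have "lower_part (M *v ?v) = 0"
    using M_Pi by (intro lower_part_mult_eq_zero[OF sym_M]) (auto simp: PiSet_def stackI_mult)
  then show ?thesis
    by (simp add: stackI_mult lower_part_mult matrix_vector_mult_add_rdistrib matrix_vector_mul_assoc)
qed

lemma quadratic_forms_in_gain_coordinates:
  obtains x u where
    "v \<bullet> (M *v v) = x \<bullet> ((transpose (stackI (schur_gain N)) ** M ** stackI (schur_gain N)) *v x)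
       + 2 * (u \<bullet> ((blk21 M + blk22 M ** schur_gain N) *v x)) + u \<bullet> (blk22 M *v u)"
    "v \<bullet> (N *v v) = u \<bullet> (blk22 N *v u)"
    "(pinv (blk22 N) ** blk22 N) *v u = u"
proof -
  let ?A = "blk22 N" and ?Z = "schur_gain N"
  have A_sym: "transpose ?A = ?A" by (rule blk_transpose(2)[OF sym_N])
  have ker_N: "mat_ker (blk22 N) \<subseteq> mat_ker (blk12 N)" using N_Pi by (simp add: PiSet_def)
  define x where "x = upper_part v"
  define w where "w = lower_part v - ?Z *v x"
  define u where "u = pinv ?A *v (?A *v w)"
  define k :: "real^('q+'r)" where "k = vstack 0 (w - u)"
  have "?A *v (w - u) = 0"
    using pinv_mult_cancel[OF A_sym, of w] by (simp add: u_def matrix_vector_mult_diff_distrib)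
  then have Mk: "M *v k = 0" and Nk: "N *v k = 0"
    unfolding k_def using ker_blk22_annihilates ker_N
    by (auto intro!: mult_vstack_zero simp: mat_ker_def)
  have "v = vstack x (?Z *v x + u) + k"
    unfolding k_def x_def w_def by (simp add: vstack_add vstack_parts)
  then have "v \<bullet> (M *v v) = vstack x (?Z *v x + u) \<bullet> (M *v vstack x (?Z *v x + u))"
    and "v \<bullet> (N *v v) = vstack x (?Z *v x + u) \<bullet> (N *v vstack x (?Z *v x + u))"
    using quadratic_form_add_kernel Mk Nk sym_M sym_N by (simp_all add: symmetric_mat_def)
  then show ?thesis
  proof (intro that)
    show "(pinv ?A ** ?A) *v u = u"
      unfolding u_def by (simp add: pinv_mult_pinv_cancel[OF A_sym] flip: matrix_vector_mul_assoc)
  qed (simp_all add: quadratic_form_stackI_add[OF sym_M]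
      quadratic_form_schur_gain[OF sym_N ker_N schur_N])
qed

lemma psd_combination_exists:
  assumes "mat_ker (transpose (stackI (schur_gain N)) ** M ** stackI (schur_gain N))
      \<subseteq> mat_ker (schur M)"
  shows "\<exists>\<alpha>\<ge>0. psd (M - \<alpha> *\<^sub>R N)"
proof -
  let ?A = "blk22 N" and ?\<Theta> = "transpose (stackI (schur_gain N)) ** M ** stackI (schur_gain N)"
    and ?C = "blk21 M + blk22 M ** schur_gain N"
  obtain K where K: "K > 0" "\<And>x. (norm (?C *v x))^2 \<le> K * (x \<bullet> (?\<Theta> *v x))"
    using psd_kernel_norm_bound[OF psd_schur_gain_form schur_gain_cross_vanishes[OF assms]] by blast
  have "psd (- ?A)" using N_Pi by (simp add: PiSet_def)
  then obtain L where L: "L > 0"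
    "\<And>u. (norm ((pinv ?A ** ?A) *v u))^2 \<le> L * (u \<bullet> ((- ?A) *v u))"
    using psd_kernel_norm_bound[of "- ?A" "pinv ?A ** ?A"]
    by (auto simp: matrix_vector_mult_uminus simp flip: matrix_vector_mul_assoc)
  obtain B where B: "B > 0" "\<And>u. norm (blk22 M *v u) \<le> B * norm u"
    using linear_bounded_pos[OF matrix_vector_mul_linear] by blast
  have "psd (M - ((K + B) * L) *\<^sub>R N)"
    unfolding psd_def symmetric_mat_def
  proof (intro conjI allI)
    show "transpose (M - ((K + B) * L) *\<^sub>R N) = M - ((K + B) * L) *\<^sub>R N"
      using sym_M sym_N by (simp add: symmetric_mat_def transpose_diff transpose_scalar)
    fix v
    obtain x u where
      M_form: "v \<bullet> (M *v v) = x \<bullet> (?\<Theta> *v x) + 2 * (u \<bullet> (?C *v x)) + u \<bullet> (blk22 M *v u)"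
      and N_form: "v \<bullet> (N *v v) = u \<bullet> (?A *v u)" and u: "(pinv ?A ** ?A) *v u = u"
      by (rule quadratic_forms_in_gain_coordinates)
    have "x \<bullet> (?\<Theta> *v x) + 2 * (u \<bullet> (?C *v x)) + u \<bullet> (blk22 M *v u)
        + ((K + B) * L) * (u \<bullet> ((- ?A) *v u)) \<ge> 0"
      using K L(2)[of u] B u by (intro square_completion_bound) auto
    then show "0 \<le> v \<bullet> ((M - ((K + B) * L) *\<^sub>R N) *v v)"
      using M_form N_form
      by (simp add: matrix_vector_mult_diff_rdistrib scaleR_matrix_vector_assoc[symmetric]
          inner_diff_right matrix_vector_mult_uminus)
  qed
  then show ?thesis using K(1) L(1) B(1) by (intro exI[of _ "(K + B) * L"]) auto
qed

end

theorem mainTheorem9: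
  fixes M N :: "real^('q::finite + 'r::finite)^('q + 'r)"
  assumes "symmetric_mat M" and "symmetric_mat N"
  shows "((\<exists>\<alpha>::real. psd (M - \<alpha> *\<^sub>R N)) \<longrightarrow> Zset0 N \<subseteq> Zset M)
    \<and> (let \<Theta> = transpose (stackI (- (pinv (blk22 N) ** blk21 N))) ** M
                 ** stackI (- (pinv (blk22 N) ** blk21 N))
       in (M \<in> PiSet \<and> N \<in> PiSet \<and> schur N = 0 \<and> mat_ker \<Theta> \<subseteq> mat_ker (schur M))
          \<longrightarrow> (Zset0 N \<subseteq> Zset M \<longleftrightarrow> (\<exists>\<alpha>::real. \<alpha> \<ge> 0 \<and> psd (M - \<alpha> *\<^sub>R N))))"
  unfolding Let_def schur_gain_def[symmetric]
  using Zset0_subset_Zset_if_psd_combination[OF assms(1)] psd_combination_exists[OF assms]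
  by blast

end
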